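(* Let $B=b_{20}D^2+b_{11}MD+b_{02}M^2+b_{10}D+b_{01}M+b_{00}I$ with $b_{20}\ne0$ and $\Delta_2\ne0$. Then the equation $Bu=0$ has the two linearly independent analytic solutions $u_j(x)=\exp\!\left(-\frac{\mathrm i}{4b_{20}}(b_{11}x^2+2b_{10}x)\right)v_j(x)$, $j=1,2$, where $v_j(x)=w_j\!\left(\left(-\frac{\Delta_2}{4b_{20}^2}\right)^{1/4}\left(x+\frac{\Delta_1}{2\Delta_2}\right)\right)$, $w_1(z)=\mathrm e^{-z^2/2}\Phi\!\left(\frac{1-\lambda}4,\frac12;z^2\right)$, $w_2(z)=\mathrm e^{-z^2/2}z\Phi\!\left(\frac{3-\lambda}4,\frac32;z^2\right)$, and $\lambda=\frac18\left(-\frac{\Delta_2}{b_{20}^2}\right)^{-3/2}\frac{\Delta_1^2-4\Delta_2\Delta_0}{b_{20}^4}$.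
   Context: $D=-\mathrm i\,d/dx$, $M$ = multiplication by $x$. $\Delta_2=b_{11}^2-4b_{20}b_{02}$, $\Delta_1=2b_{11}b_{10}-4b_{20}b_{01}$, $\Delta_0=b_{10}^2-4b_{20}b_{00}-2\mathrm i b_{20}b_{11}$. Powers: $z^\mu=\mathrm e^{\mu\log|z|+\mathrm i\mu\operatorname{Arg}z}$ with principal argument $\operatorname{Arg}z\in(-\pi,\pi]$. $\Phi(p,q;z)=\sum_{k\ge0}\frac{(p)_k}{k!(q)_k}z^k$ with $(p)_0=1$, $(p)_k=p(p+1)\cdots(p+k-1)$. *)

theory Defs
  imports "HOL-Analysis.Analysis"
begin

definition kummer :: "complex \<Rightarrow> complex \<Rightarrow> complex \<Rightarrow> complex" where
  "kummer p q z = (\<Sum>k. pochhammer p k / (of_nat (fact k) * pochhammer q k) * z ^ k)"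

text \<open>The operator B = b20 D^2 + b11 M D + b02 M^2 + b10 D + b01 M + b00 I
  with D = -i d/dx and M multiplication by x, applied to u at the point x.\<close>
definition Bop :: "complex \<Rightarrow> complex \<Rightarrow> complex \<Rightarrow> complex \<Rightarrow> complex \<Rightarrow> complex
    \<Rightarrow> (complex \<Rightarrow> complex) \<Rightarrow> complex \<Rightarrow> complex" where
  "Bop b20 b11 b02 b10 b01 b00 u x =
     b20 * ((-\<i>) * deriv (\<lambda>y. (-\<i>) * deriv u y) x)
   + b11 * (x * ((-\<i>) * deriv u x))
   + b02 * (x\<^sup>2 * u x)
   + b10 * ((-\<i>) * deriv u x)
   + b01 * (x * u x)
   + b00 * u x"

definition Delta2 :: "complex \<Rightarrow> complex \<Rightarrow> complex \<Rightarrow> complex" where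
  "Delta2 b20 b11 b02 = b11\<^sup>2 - 4 * b20 * b02"

definition Delta1 :: "complex \<Rightarrow> complex \<Rightarrow> complex \<Rightarrow> complex \<Rightarrow> complex" where
  "Delta1 b20 b11 b10 b01 = 2 * b11 * b10 - 4 * b20 * b01"

definition Delta0 :: "complex \<Rightarrow> complex \<Rightarrow> complex \<Rightarrow> complex \<Rightarrow> complex" where
  "Delta0 b20 b11 b10 b00 = b10\<^sup>2 - 4 * b20 * b00 - 2 * \<i> * b20 * b11"

text \<open>Complex powers use the principal branch: z powr mu = exp (mu * Ln z),
  Arg in (-pi, pi].\<close>
definition lam :: "complex \<Rightarrow> complex \<Rightarrow> complex \<Rightarrow> complex \<Rightarrow> complex \<Rightarrow> complex \<Rightarrow> complex" where
  "lam b20 b11 b02 b10 b01 b00 =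
     (let D2 = Delta2 b20 b11 b02; D1 = Delta1 b20 b11 b10 b01; D0 = Delta0 b20 b11 b10 b00
      in 1/8 * (- D2 / b20\<^sup>2) powr (-3/2) * ((D1\<^sup>2 - 4 * D2 * D0) / b20 ^ 4))"

definition w1 :: "complex \<Rightarrow> complex \<Rightarrow> complex" where
  "w1 l z = exp (- z\<^sup>2 / 2) * kummer ((1 - l) / 4) (1/2) (z\<^sup>2)"

definition w2 :: "complex \<Rightarrow> complex \<Rightarrow> complex" where
  "w2 l z = exp (- z\<^sup>2 / 2) * z * kummer ((3 - l) / 4) (3/2) (z\<^sup>2)"

definition usol :: "(complex \<Rightarrow> complex \<Rightarrow> complex) \<Rightarrow> complex \<Rightarrow> complex \<Rightarrow> complex
    \<Rightarrow> complex \<Rightarrow> complex \<Rightarrow> complex \<Rightarrow> complex \<Rightarrow> complex" where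
  "usol w b20 b11 b02 b10 b01 b00 x =
     (let D2 = Delta2 b20 b11 b02; D1 = Delta1 b20 b11 b10 b01;
          l = lam b20 b11 b02 b10 b01 b00
      in exp (- \<i> / (4 * b20) * (b11 * x\<^sup>2 + 2 * b10 * x))
         * w l ((- D2 / (4 * b20\<^sup>2)) powr (1/4) * (x + D1 / (2 * D2))))"

end

theory Submission
  imports Defs "HOL-Complex_Analysis.Complex_Analysis"
begin

text \<open>Multiplying by \<open>exp (- \<i> (b11 x\<^sup>2 + 2 b10 x) / (4 b20))\<close> removes the first-order part of B,
  and the affine substitution \<open>z = c (x + \<Delta>1 / (2 \<Delta>2))\<close> with \<open>c\<^sup>4 = - \<Delta>2 / (4 b20\<^sup>2)\<close> turns
  \<open>B u = 0\<close> into Weber's equation \<open>w'' = (z\<^sup>2 - \<lambda>) w\<close>. Writing \<open>w = exp (- z\<^sup>2 / 2) h\<close> gives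
  \<open>h'' - 2 z h' + (\<lambda> - 1) h = 0\<close>, which \<open>\<Phi>(a, 1/2; z\<^sup>2)\<close> and \<open>z \<Phi>(a + 1/2, 3/2; z\<^sup>2)\<close> solve because
  Kummer's function satisfies \<open>t \<Phi>'' + (q - t) \<Phi>' = p \<Phi>\<close>. Since \<open>w1(0) = 1\<close>, \<open>w2(0) = 0\<close> and
  \<open>w2'(0) = 1\<close>, no nontrivial combination of \<open>w1\<close> and \<open>w2\<close> vanishes identically, and a linear
  relation on the real line extends to \<open>\<complex>\<close> by analytic continuation.\<close>

definition kummer_coeff :: "complex \<Rightarrow> complex \<Rightarrow> nat \<Rightarrow> complex" where
  "kummer_coeff p q n = pochhammer p n / (fact n * pochhammer q n)"

lemma kummer_eq_suminf: "kummer p q z = (\<Sum>n. kummer_coeff p q n * z ^ n)"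
  by (simp add: kummer_def kummer_coeff_def)

lemma kummer_coeff_Suc:
  assumes "q \<notin> \<int>\<^sub>\<le>\<^sub>0"
  shows "(of_nat n + 1) * (q + of_nat n) * kummer_coeff p q (Suc n) = (p + of_nat n) * kummer_coeff p q n"
proof -
  have "pochhammer q (Suc n) \<noteq> 0"
    using assms by (auto dest: pochhammer_eq_0_imp_nonpos_Int)
  then have "(of_nat (Suc n)) * (q + of_nat n) \<noteq> 0"
    by (simp add: pochhammer_Suc del: of_nat_Suc)
  moreover have "kummer_coeff p q (Suc n)
      = (p + of_nat n) * kummer_coeff p q n / ((of_nat n + 1) * (q + of_nat n))"
    by (simp add: kummer_coeff_def pochhammer_Suc fact_Suc algebra_simps)
  ultimately show ?thesis
    by (simp add: add.commute)
qed

lemma summable_kummer: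
  assumes "q \<notin> \<int>\<^sub>\<le>\<^sub>0"
  shows "summable (\<lambda>n. kummer_coeff p q n * z ^ n)"
proof -
  define a where "a n = kummer_coeff p q n * z ^ n" for n
  define C where "C = (norm p + 1) * norm z"
  have "0 \<le> C"
    by (simp add: C_def)
  obtain N :: nat where N: "2 * norm q + 4 * C + 1 < real N"
    using reals_Archimedean2 by blast
  have "norm (a (Suc n)) \<le> 1/2 * norm (a n)" if "N \<le> n" for n
  proof -
    have n: "2 * norm q + 4 * C + 1 < real n"
      using N that by linarith
    then have "1 \<le> real n"
      using \<open>0 \<le> C\<close> norm_ge_zero[of q] by linarith
    have "real n - norm q \<le> norm (q + of_nat n)"
      using norm_triangle_ineq2[of "of_nat n" "-q"] by (simp add: add.commute)
    then have q: "real n / 2 \<le> norm (q + of_nat n)"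
      using n \<open>0 \<le> C\<close> by linarith
    have "norm p \<le> real n * norm p"
      using \<open>1 \<le> real n\<close> by (simp add: mult_le_cancel_right1)
    then have p: "norm (p + of_nat n) \<le> (norm p + 1) * real n"
      using norm_triangle_ineq[of p "of_nat n"] by (simp add: algebra_simps)
    have rec: "(of_nat n + 1) * (q + of_nat n) * a (Suc n) = (p + of_nat n) * z * a n"
      using kummer_coeff_Suc[OF assms, of n p] by (simp add: a_def ac_simps)
    have "norm (of_nat n + 1 :: complex) = real n + 1"
      by (metis norm_of_nat of_nat_Suc add.commute)
    then have "real n * ((real n + 1) / 2 * norm (a (Suc n)))
        \<le> norm (q + of_nat n) * (norm (of_nat n + 1 :: complex) * norm (a (Suc n)))"
      using mult_right_mono[OF q, of "(real n + 1) * norm (a (Suc n))"] by simp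
    also have "\<dots> = norm (p + of_nat n) * norm z * norm (a n)"
      using arg_cong[OF rec, of norm] by (simp add: norm_mult ac_simps)
    also have "\<dots> \<le> real n * (C * norm (a n))"
      using mult_right_mono[OF p, of "norm z * norm (a n)"] by (simp add: C_def ac_simps)
    finally have "(real n + 1) * (2 * norm (a (Suc n))) \<le> 4 * C * norm (a n)"
      using \<open>1 \<le> real n\<close> by simp
    also have "\<dots> \<le> (real n + 1) * norm (a n)"
      using n norm_ge_zero[of q] by (intro mult_right_mono) (linarith, simp)
    finally show ?thesis
      by simp
  qed
  then show ?thesis
    unfolding a_def[symmetric] by (intro summable_ratio_test[of "1/2" N]) auto
qed

lemma has_field_derivative_entire_powser:
  fixes c :: "nat \<Rightarrow> complex"
  assumes "\<And>z. summable (\<lambda>n. c n * z ^ n)"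
  shows "((\<lambda>z. \<Sum>n. c n * z ^ n) has_field_derivative (\<Sum>n. diffs c n * z ^ n)) (at z)"
    and "deriv (\<lambda>z. \<Sum>n. c n * z ^ n) = (\<lambda>z. \<Sum>n. diffs c n * z ^ n)"
  using termdiffs_strong_converges_everywhere[OF assms] by (auto intro!: DERIV_imp_deriv)

lemma sums_of_nat_mult_powser:
  fixes c :: "nat \<Rightarrow> complex"
  assumes "summable (\<lambda>n. diffs c n * z ^ n)"
  shows "(\<lambda>n. of_nat n * c n * z ^ n) sums (z * (\<Sum>n. diffs c n * z ^ n))"
proof -
  have "(\<lambda>n. z * (diffs c n * z ^ n)) sums (z * (\<Sum>n. diffs c n * z ^ n))"
    using sums_mult[OF summable_sums[OF assms]] .
  then have "(\<lambda>n. of_nat (Suc n) * c (Suc n) * z ^ Suc n) sums (z * (\<Sum>n. diffs c n * z ^ n))"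
    by (simp add: diffs_def ac_simps)
  then show ?thesis
    by (subst (asm) sums_Suc_iff) simp
qed

lemma kummer_holomorphic:
  assumes "q \<notin> \<int>\<^sub>\<le>\<^sub>0"
  shows "kummer p q holomorphic_on UNIV"
  using has_field_derivative_entire_powser(1)[OF summable_kummer[OF assms]]
  by (auto simp: holomorphic_on_def field_differentiable_def kummer_eq_suminf[abs_def])

lemma kummer_ode:
  assumes "q \<notin> \<int>\<^sub>\<le>\<^sub>0"
  shows "z * deriv (deriv (kummer p q)) z + (q - z) * deriv (kummer p q) z = p * kummer p q z"
proof -
  define c where "c = kummer_coeff p q"
  have s0: "summable (\<lambda>n. c n * y ^ n)" for y
    unfolding c_def by (rule summable_kummer[OF assms])
  have s1: "summable (\<lambda>n. diffs c n * y ^ n)" for y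
    using termdiff_converges_all[OF s0] .
  have s2: "summable (\<lambda>n. diffs (diffs c) n * y ^ n)" for y
    using termdiff_converges_all[OF s1] .
  define K0 K1 K2 where "K0 = (\<Sum>n. c n * z ^ n)" and "K1 = (\<Sum>n. diffs c n * z ^ n)"
    and "K2 = (\<Sum>n. diffs (diffs c) n * z ^ n)"
  have "kummer p q = (\<lambda>z. \<Sum>n. c n * z ^ n)"
    by (simp add: c_def kummer_eq_suminf[abs_def])
  then have K: "kummer p q z = K0" "deriv (kummer p q) z = K1" "deriv (deriv (kummer p q)) z = K2"
    by (simp_all add: K0_def K1_def K2_def has_field_derivative_entire_powser(2) s0 s1)
  have "(\<lambda>n. of_nat n * diffs c n * z ^ n + q * (diffs c n * z ^ n)
          - (of_nat n * c n * z ^ n + p * (c n * z ^ n))) sums (z * K2 + q * K1 - (z * K1 + p * K0))"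
    unfolding K0_def K1_def K2_def
    by (intro sums_diff sums_add sums_mult sums_of_nat_mult_powser summable_sums s0 s1 s2)
  moreover have "of_nat n * diffs c n * z ^ n + q * (diffs c n * z ^ n)
          - (of_nat n * c n * z ^ n + p * (c n * z ^ n)) = 0" for n
  proof -
    have "of_nat n * diffs c n * z ^ n + q * (diffs c n * z ^ n)
          - (of_nat n * c n * z ^ n + p * (c n * z ^ n))
        = z ^ n * ((of_nat n + 1) * (q + of_nat n) * c (Suc n) - (p + of_nat n) * c n)"
      by (simp add: diffs_def algebra_simps)
    then show ?thesis
      unfolding c_def kummer_coeff_Suc[OF assms] by simp
  qed
  ultimately have "z * K2 + q * K1 - (z * K1 + p * K0) = 0"
    using sums_unique2 sums_zero by fastforce
  then show ?thesis
    unfolding K by (simp add: algebra_simps)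
qed

lemma entire_has_field_derivative:
  assumes "f holomorphic_on UNIV"
  shows "(f has_field_derivative deriv f z) (at z)"
    and "(deriv f has_field_derivative deriv (deriv f) z) (at z)"
  using assms by (auto intro!: holomorphic_derivI holomorphic_deriv)

lemma has_field_derivative_entire_comp:
  assumes "f holomorphic_on UNIV" and "(g has_field_derivative g') (at z)"
    and "D = deriv f (g z) * g'"
  shows "((\<lambda>z. f (g z)) has_field_derivative D) (at z)"
  using DERIV_chain2[OF entire_has_field_derivative(1)[OF assms(1)] assms(2)] assms(3) by simp

definition weber_solution :: "complex \<Rightarrow> (complex \<Rightarrow> complex) \<Rightarrow> bool" where
  "weber_solution l w \<longleftrightarrow> w holomorphic_on UNIV \<and> (\<forall>z. deriv (deriv w) z = (z\<^sup>2 - l) * w z)"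

lemma weber_solution_exp_mult:
  assumes h: "h holomorphic_on UNIV"
    and ode: "\<And>z. deriv (deriv h) z - 2 * z * deriv h z + (l - 1) * h z = 0"
  shows "weber_solution l (\<lambda>z. exp (- z\<^sup>2 / 2) * h z)"
proof -
  note h' = entire_has_field_derivative[OF h]
  define w' where "w' z = exp (- z\<^sup>2 / 2) * (deriv h z - z * h z)" for z
  have "((\<lambda>z. exp (- z\<^sup>2 / 2) * h z) has_field_derivative w' z) (at z)" for z
    unfolding w'_def by (auto intro!: derivative_eq_intros h' simp: algebra_simps)
  then have "deriv (\<lambda>z. exp (- z\<^sup>2 / 2) * h z) = w'"
    by (auto intro!: DERIV_imp_deriv)
  moreover have "(w' has_field_derivative (z\<^sup>2 - l) * (exp (- z\<^sup>2 / 2) * h z)) (at z)" for z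
  proof -
    have "(w' has_field_derivative
        exp (- z\<^sup>2 / 2) * (deriv (deriv h) z - 2 * z * deriv h z + (z\<^sup>2 - 1) * h z)) (at z)"
      unfolding w'_def[abs_def]
      by (auto intro!: derivative_eq_intros h' simp: algebra_simps power2_eq_square)
    moreover have "deriv (deriv h) z - 2 * z * deriv h z + (z\<^sup>2 - 1) * h z = (z\<^sup>2 - l) * h z"
      using ode[of z] by (simp add: algebra_simps)
    ultimately show ?thesis
      by (simp add: ac_simps)
  qed
  ultimately show ?thesis
    unfolding weber_solution_def using h by (auto intro!: holomorphic_intros DERIV_imp_deriv)
qed

lemma Re_pos_notin_nonpos_Ints: "0 < Re q \<Longrightarrow> q \<notin> \<int>\<^sub>\<le>\<^sub>0"
  by (auto elim!: nonpos_Ints_cases)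

lemma weber_solution_w1: "weber_solution l (w1 l)"
proof -
  define a where "a = (1 - l) / 4"
  define K where "K = kummer a (1/2)"
  have K: "K holomorphic_on UNIV" "deriv K holomorphic_on UNIV"
    and ode: "\<And>t. t * deriv (deriv K) t + (1/2 - t) * deriv K t = a * K t"
    unfolding K_def using Re_pos_notin_nonpos_Ints[of "1/2"]
    by (auto intro: kummer_holomorphic kummer_ode holomorphic_deriv)
  define h where "h z = K (z\<^sup>2)" for z
  define h' where "h' z = 2 * z * deriv K (z\<^sup>2)" for z
  have dh: "(h has_field_derivative h' z) (at z)" for z
    unfolding h_def[abs_def] h'_def
    by (rule has_field_derivative_entire_comp[OF K(1)]) (auto intro!: derivative_eq_intros)
  have dh': "(h' has_field_derivative 2 * deriv K (z\<^sup>2) + 4 * z\<^sup>2 * deriv (deriv K) (z\<^sup>2)) (at z)" for z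
    unfolding h'_def[abs_def]
    by (auto intro!: derivative_eq_intros has_field_derivative_entire_comp[OF K(2)]
        simp: algebra_simps power2_eq_square)
  have "deriv h = h'"
    using dh by (auto intro!: DERIV_imp_deriv)
  then have "deriv (deriv h) z - 2 * z * deriv h z + (l - 1) * h z
      = 4 * (z\<^sup>2 * deriv (deriv K) (z\<^sup>2) + (1/2 - z\<^sup>2) * deriv K (z\<^sup>2) - a * K (z\<^sup>2))" for z
    using DERIV_imp_deriv[OF dh'] by (simp add: h_def h'_def a_def field_simps power2_eq_square)
  moreover have "h holomorphic_on UNIV"
    using dh by (auto simp: holomorphic_on_def field_differentiable_def)
  moreover have "w1 l = (\<lambda>z. exp (- z\<^sup>2 / 2) * h z)"
    by (simp add: w1_def h_def K_def a_def fun_eq_iff)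
  ultimately show ?thesis
    using weber_solution_exp_mult[of h l] ode by simp
qed

lemma weber_solution_w2: "weber_solution l (w2 l)"
proof -
  define a where "a = (3 - l) / 4"
  define K where "K = kummer a (3/2)"
  have K: "K holomorphic_on UNIV" "deriv K holomorphic_on UNIV"
    and ode: "\<And>t. t * deriv (deriv K) t + (3/2 - t) * deriv K t = a * K t"
    unfolding K_def using Re_pos_notin_nonpos_Ints[of "3/2"]
    by (auto intro: kummer_holomorphic kummer_ode holomorphic_deriv)
  define h where "h z = z * K (z\<^sup>2)" for z
  define h' where "h' z = K (z\<^sup>2) + 2 * z\<^sup>2 * deriv K (z\<^sup>2)" for z
  have dh: "(h has_field_derivative h' z) (at z)" for z
    unfolding h_def[abs_def] h'_def
    by (auto intro!: derivative_eq_intros has_field_derivative_entire_comp[OF K(1)]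
        simp: algebra_simps power2_eq_square)
  have dh': "(h' has_field_derivative 6 * z * deriv K (z\<^sup>2) + 4 * z ^ 3 * deriv (deriv K) (z\<^sup>2)) (at z)" for z
    unfolding h'_def[abs_def]
    by (auto intro!: derivative_eq_intros has_field_derivative_entire_comp[OF K(1)]
        has_field_derivative_entire_comp[OF K(2)] simp: algebra_simps power2_eq_square power3_eq_cube)
  have "deriv h = h'"
    using dh by (auto intro!: DERIV_imp_deriv)
  then have "deriv (deriv h) z - 2 * z * deriv h z + (l - 1) * h z
      = 4 * z * (z\<^sup>2 * deriv (deriv K) (z\<^sup>2) + (3/2 - z\<^sup>2) * deriv K (z\<^sup>2) - a * K (z\<^sup>2))" for z
    using DERIV_imp_deriv[OF dh']
    by (simp add: h_def h'_def a_def field_simps power2_eq_square power3_eq_cube)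
  moreover have "h holomorphic_on UNIV"
    using dh by (auto simp: holomorphic_on_def field_differentiable_def)
  moreover have "w2 l = (\<lambda>z. exp (- z\<^sup>2 / 2) * h z)"
    by (simp add: w2_def h_def K_def a_def fun_eq_iff)
  ultimately show ?thesis
    using weber_solution_exp_mult[of h l] ode by simp
qed

lemma kummer_at_0 [simp]: "kummer p q 0 = 1"
  unfolding kummer_eq_suminf by (subst powser_zero) (simp add: kummer_coeff_def)

lemma w1_at_0: "w1 l 0 = 1" and w2_at_0: "w2 l 0 = 0"
  by (simp_all add: w1_def w2_def)

lemma deriv_w2_at_0: "deriv (w2 l) 0 = 1"
proof -
  define K where "K = kummer ((3 - l) / 4) (3/2)"
  have "K holomorphic_on UNIV"
    unfolding K_def using Re_pos_notin_nonpos_Ints[of "3/2"] by (simp add: kummer_holomorphic)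
  then have "((\<lambda>z. K (z\<^sup>2)) has_field_derivative 0) (at 0)"
    by (rule has_field_derivative_entire_comp) (auto intro!: derivative_eq_intros)
  then have "((\<lambda>z. exp (- z\<^sup>2 / 2) * z * K (z\<^sup>2)) has_field_derivative 1) (at 0)"
    by (auto intro!: derivative_eq_intros simp: K_def)
  then show ?thesis
    unfolding w2_def[abs_def] K_def by (rule DERIV_imp_deriv)
qed

lemma four_powr_minus_three_halves: "(4 :: complex) powr (- 3/2) = 1/8"
proof -
  have "(4 :: real) powr (3/2) = 4 powr 1 * 4 powr (1/2)"
    by (simp flip: powr_add)
  then have r: "(4 :: real) powr (- 3/2) = 1/8"
    by (simp add: powr_minus_divide powr_half_sqrt)
  have "(4 :: complex) powr (- 3/2) = of_real ((4 :: real) powr (- 3/2))"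
    using powr_of_real[of 4 "- 3/2"] by simp
  also have "\<dots> = 1/8"
    unfolding r by simp
  finally show ?thesis .
qed

lemma quarter_powr_pow4: "(a :: complex) \<noteq> 0 \<Longrightarrow> (a powr (1/4)) ^ 4 = a"
  by (simp add: powr_power)

lemma quarter_powr_sq_mult_powr:
  fixes a :: complex
  assumes "a \<noteq> 0"
  shows "(a powr (1/4))\<^sup>2 * (4 * a) powr (- 3/2) = 1 / (8 * a)"
proof -
  have "(a powr (1/4))\<^sup>2 * (4 * a) powr (- 3/2) = 4 powr (- 3/2) * (a powr (1/2) * a powr (- 3/2))"
    using assms by (simp add: powr_power powr_times_real_left)
  also have "a powr (1/2) * a powr (- 3/2) = a powr (- 1)"
    by (subst powr_add[symmetric]) simp
  also have "\<dots> = inverse a"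
    by (simp add: powr_minus)
  also have "4 powr (- 3/2) = (1/8 :: complex)"
    by (rule four_powr_minus_three_halves)
  finally show ?thesis
    by (simp add: field_simps)
qed

lemma weber_scaling:
  fixes b20 b11 b02 b10 b01 b00 x :: complex
  assumes "b20 \<noteq> 0" and "Delta2 b20 b11 b02 \<noteq> 0"
  defines "c \<equiv> (- Delta2 b20 b11 b02 / (4 * b20\<^sup>2)) powr (1/4)"
    and "d \<equiv> Delta1 b20 b11 b10 b01 / (2 * Delta2 b20 b11 b02)"
    and "l \<equiv> lam b20 b11 b02 b10 b01 b00"
  shows "4 * b20\<^sup>2 * c\<^sup>2 * ((c * (x + d))\<^sup>2 - l)
      = - (Delta2 b20 b11 b02 * x\<^sup>2 + Delta1 b20 b11 b10 b01 * x + Delta0 b20 b11 b10 b00)"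
proof -
  define D2 D1 D0 where "D2 = Delta2 b20 b11 b02" and "D1 = Delta1 b20 b11 b10 b01"
    and "D0 = Delta0 b20 b11 b10 b00"
  define a where "a = - D2 / (4 * b20\<^sup>2)"
  have "a \<noteq> 0"
    using assms(1,2) by (simp add: a_def D2_def)
  have c: "c = a powr (1/4)"
    by (simp add: c_def a_def D2_def)
  have c4: "c ^ 4 = a"
    using \<open>a \<noteq> 0\<close> by (simp add: c quarter_powr_pow4)
  have "c\<^sup>2 * l = 1/8 * (c\<^sup>2 * (4 * a) powr (- 3/2)) * ((D1\<^sup>2 - 4 * D2 * D0) / b20 ^ 4)"
    using assms(1) by (simp add: l_def lam_def Let_def D2_def D1_def D0_def a_def field_simps)
  also have "c\<^sup>2 * (4 * a) powr (- 3/2) = 1 / (8 * a)"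
    unfolding c by (rule quarter_powr_sq_mult_powr[OF \<open>a \<noteq> 0\<close>])
  finally have cl: "c\<^sup>2 * l = (D1\<^sup>2 - 4 * D2 * D0) / (64 * a * b20 ^ 4)"
    by simp
  have "4 * b20\<^sup>2 * c\<^sup>2 * ((c * (x + d))\<^sup>2 - l) = 4 * b20\<^sup>2 * (c ^ 4 * (x + d)\<^sup>2 - c\<^sup>2 * l)"
    by (simp add: algebra_simps power2_eq_square power4_eq_xxxx)
  also have "\<dots> = - (D2 * x\<^sup>2 + D1 * x + D0)"
    unfolding c4 cl using assms(1,2)
    by (simp add: a_def d_def D2_def D1_def field_simps power2_eq_square power4_eq_xxxx)
  finally show ?thesis
    by (simp add: D2_def D1_def D0_def)
qed

lemma Bop_weber_substitution:
  fixes b20 b11 b02 b10 b01 b00 c d l :: complex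
  assumes W: "weber_solution l W" and "b20 \<noteq> 0"
    and scaling: "\<And>x. 4 * b20\<^sup>2 * c\<^sup>2 * ((c * (x + d))\<^sup>2 - l)
      = - (Delta2 b20 b11 b02 * x\<^sup>2 + Delta1 b20 b11 b10 b01 * x + Delta0 b20 b11 b10 b00)"
  defines "u \<equiv> \<lambda>x. exp (- \<i> / (4 * b20) * (b11 * x\<^sup>2 + 2 * b10 * x)) * W (c * (x + d))"
  shows "u holomorphic_on UNIV" and "Bop b20 b11 b02 b10 b01 b00 u x = 0"
proof -
  \<comment> \<open>\<open>f = E'/E\<close> is chosen so that the terms in \<open>v'\<close> cancel in \<open>B u\<close>.\<close>
  have W0: "W holomorphic_on UNIV" and W1: "deriv W holomorphic_on UNIV"
    and W2: "\<And>z. deriv (deriv W) z = (z\<^sup>2 - l) * W z"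
    using W by (auto simp: weber_solution_def intro: holomorphic_deriv)
  define E where "E x = exp (- \<i> / (4 * b20) * (b11 * x\<^sup>2 + 2 * b10 * x))" for x
  define f where "f x = - \<i> / (4 * b20) * (2 * b11 * x + 2 * b10)" for x
  define f' where "f' = - \<i> / (4 * b20) * (2 * b11)"
  define v where "v x = W (c * (x + d))" for x
  define v' where "v' x = c * deriv W (c * (x + d))" for x
  define v'' where "v'' x = c\<^sup>2 * deriv (deriv W) (c * (x + d))" for x
  define u' where "u' x = E x * (f x * v x + v' x)" for x
  define u'' where "u'' x = E x * (f x * (f x * v x + v' x) + f' * v x + f x * v' x + v'' x)" for x
  have dE: "(E has_field_derivative E x * f x) (at x)" for x
    unfolding E_def[abs_def] f_def using \<open>b20 \<noteq> 0\<close>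
    by (auto intro!: derivative_eq_intros simp: field_simps)
  have df: "(f has_field_derivative f') (at x)" for x
    unfolding f_def[abs_def] f'_def using \<open>b20 \<noteq> 0\<close>
    by (auto intro!: derivative_eq_intros)
  have dv: "(v has_field_derivative v' x) (at x)" for x
    unfolding v_def[abs_def] v'_def
    by (auto intro!: derivative_eq_intros has_field_derivative_entire_comp[OF W0])
  have dv': "(v' has_field_derivative v'' x) (at x)" for x
    unfolding v'_def[abs_def] v''_def
    by (auto intro!: derivative_eq_intros has_field_derivative_entire_comp[OF W1]
        simp: power2_eq_square)
  have u: "u = (\<lambda>x. E x * v x)"
    by (simp add: u_def E_def v_def)
  have du: "(u has_field_derivative u' x) (at x)" for x
    unfolding u u'_def by (auto intro!: derivative_eq_intros dE dv simp: algebra_simps)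
  have du': "(u' has_field_derivative u'' x) (at x)" for x
    unfolding u'_def[abs_def] u''_def by (auto intro!: derivative_eq_intros dE df dv dv' simp: algebra_simps)
  show "u holomorphic_on UNIV"
    using du by (auto simp: holomorphic_on_def field_differentiable_def)
  have "v'' x = 4 * b20\<^sup>2 * c\<^sup>2 * ((c * (x + d))\<^sup>2 - l) / (4 * b20\<^sup>2) * v x"
    using \<open>b20 \<noteq> 0\<close> by (simp add: v''_def v_def W2)
  then have v'': "v'' x = - (Delta2 b20 b11 b02 * x\<^sup>2 + Delta1 b20 b11 b10 b01 * x
      + Delta0 b20 b11 b10 b00) / (4 * b20\<^sup>2) * v x"
    by (simp only: scaling)
  have "deriv u = u'"
    using du by (auto intro!: DERIV_imp_deriv)
  moreover have "deriv (\<lambda>y. - \<i> * u' y) x = - \<i> * u'' x"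
    by (intro DERIV_imp_deriv DERIV_cmult du')
  ultimately have "Bop b20 b11 b02 b10 b01 b00 u x = b20 * (- \<i> * (- \<i> * u'' x))
      + b11 * (x * (- \<i> * u' x)) + b02 * (x\<^sup>2 * u x) + b10 * (- \<i> * u' x)
      + b01 * (x * u x) + b00 * u x"
    by (simp add: Bop_def)
  also have "\<dots> = 0"
    using \<open>b20 \<noteq> 0\<close>
    by (simp add: u u'_def u''_def v'' f_def f'_def Delta2_def Delta1_def Delta0_def
        field_simps power2_eq_square)
  finally show "Bop b20 b11 b02 b10 b01 b00 u x = 0" .
qed

lemma entire_vanishing_on_Reals:
  assumes "f holomorphic_on UNIV" and "\<And>x. f (complex_of_real x) = 0"
  shows "f z = 0"
proof (rule analytic_continuation[of f UNIV "\<real>" 0])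
  show "0 islimpt (\<real> :: complex set)"
    unfolding islimpt_approachable
  proof (intro allI impI)
    fix e :: real
    assume "e > 0"
    then show "\<exists>x'\<in>\<real>. x' \<noteq> 0 \<and> dist x' (0 :: complex) < e"
      by (intro bexI[of _ "complex_of_real (e / 2)"]) (simp_all add: dist_norm)
  qed
qed (use assms in \<open>auto elim: Reals_cases\<close>)

lemma lincomb_affine_eq_0_imp_coeffs_eq_0:
  fixes E f g :: "complex \<Rightarrow> complex"
  assumes "\<And>x. E x \<noteq> 0" and "c \<noteq> 0"
    and lincomb: "\<And>x. a * (E x * f (c * (x + d))) + b * (E x * g (c * (x + d))) = 0"
    and "f 0 = 1" "g 0 = 0" "deriv g 0 = 1"
  shows "a = 0 \<and> b = 0"
proof -
  have "a * f z + b * g z = 0" for z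
  proof -
    have "E (z / c - d) * (a * f z + b * g z) = 0"
      using lincomb[of "z / c - d"] \<open>c \<noteq> 0\<close> by (simp add: algebra_simps)
    then show ?thesis
      using assms(1) by simp
  qed
  then have "a = 0"
    using \<open>\<And>z. a * f z + b * g z = 0\<close>[of 0] assms(4,5) by simp
  moreover have "b = 0"
  proof (rule ccontr)
    assume "b \<noteq> 0"
    then have "g = (\<lambda>_. 0)"
      using \<open>\<And>z. a * f z + b * g z = 0\<close> \<open>a = 0\<close> by auto
    then show False
      using assms(6) by simp
  qed
  ultimately show ?thesis ..
qed

theorem proposition4p9:
  fixes b20 b11 b02 b10 b01 b00 :: complex
  assumes "b20 \<noteq> 0" and "Delta2 b20 b11 b02 \<noteq> 0"
  defines "u1 \<equiv> usol w1 b20 b11 b02 b10 b01 b00"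
      and "u2 \<equiv> usol w2 b20 b11 b02 b10 b01 b00"
  shows "u1 holomorphic_on UNIV \<and> u2 holomorphic_on UNIV
       \<and> (\<forall>x. Bop b20 b11 b02 b10 b01 b00 u1 x = 0)
       \<and> (\<forall>x. Bop b20 b11 b02 b10 b01 b00 u2 x = 0)
       \<and> (\<forall>c1 c2 :: complex. (\<forall>x::real. c1 * u1 (complex_of_real x) + c2 * u2 (complex_of_real x) = 0)
             \<longrightarrow> c1 = 0 \<and> c2 = 0)"
proof -
  define c where "c = (- Delta2 b20 b11 b02 / (4 * b20\<^sup>2)) powr (1/4)"
  define d where "d = Delta1 b20 b11 b10 b01 / (2 * Delta2 b20 b11 b02)"
  define l where "l = lam b20 b11 b02 b10 b01 b00"
  define E where "E x = exp (- \<i> / (4 * b20) * (b11 * x\<^sup>2 + 2 * b10 * x))" for x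
  have u: "u1 = (\<lambda>x. E x * w1 l (c * (x + d)))" "u2 = (\<lambda>x. E x * w2 l (c * (x + d)))"
    unfolding u1_def u2_def usol_def Let_def E_def c_def d_def l_def by simp_all
  have scaling: "\<And>x. 4 * b20\<^sup>2 * c\<^sup>2 * ((c * (x + d))\<^sup>2 - l)
      = - (Delta2 b20 b11 b02 * x\<^sup>2 + Delta1 b20 b11 b10 b01 * x + Delta0 b20 b11 b10 b00)"
    unfolding c_def d_def l_def by (rule weber_scaling[OF assms(1,2)])
  note u1 = Bop_weber_substitution[OF weber_solution_w1 assms(1) scaling, folded E_def u(1)]
  note u2 = Bop_weber_substitution[OF weber_solution_w2 assms(1) scaling, folded E_def u(2)]
  have "c ^ 4 \<noteq> 0"
    unfolding c_def using assms by (simp add: quarter_powr_pow4)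
  then have "c \<noteq> 0"
    by simp
  have "c1 = 0 \<and> c2 = 0"
    if "\<forall>x::real. c1 * u1 (complex_of_real x) + c2 * u2 (complex_of_real x) = 0" for c1 c2
  proof (rule lincomb_affine_eq_0_imp_coeffs_eq_0[where E = E and f = "w1 l" and g = "w2 l"])
    have "(\<lambda>z. c1 * u1 z + c2 * u2 z) holomorphic_on UNIV"
      using u1(1) u2(1) by (auto intro!: holomorphic_intros)
    then have "c1 * u1 x + c2 * u2 x = 0" for x
      by (rule entire_vanishing_on_Reals) (use that in simp)
    then show "c1 * (E x * w1 l (c * (x + d))) + c2 * (E x * w2 l (c * (x + d))) = 0" for x
      unfolding u .
  qed (simp_all add: E_def \<open>c \<noteq> 0\<close> w1_at_0 w2_at_0 deriv_w2_at_0)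
  then show ?thesis
    using u1 u2 by blast
qed

end
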